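(* Let $M$ be a dihedral axial decomposition algebra of Majorana type $(\eta,\eta)$ over a field $\mathbb{F}$ with $\operatorname{char}\mathbb{F}\neq2$, where $\eta\in\mathbb{F}\setminus\{0,1,\tfrac12\}$, with generating axes $(a_i)_{i\in\mathbb{Z}}$. Let $\mu\in\mathbb{F}$ be such that $a_0p_{2,1}=\frac{(2\eta-1)(4\lambda_1-3\eta)}{2\eta}(2p_{1,0}+\eta(a_1+a_{-1}))+\mu a_0$. If $\lambda_1=\frac{3\eta}{4}$, then $p_{2,1}=p_{2,0}$ or $\mu=0$.
   Context: $M$ is a commutative nonassociative $\mathbb{F}$-algebra. With $\Phi(0)=0,\Phi(1)=1,\Phi(2)=\Phi(3)=\eta$, an axis $a\in M$ is an element together with a decomposition $M=\bigoplus_{i=0}^3M^i(a)$ such that $xa=\Phi(i)x$ for $x\in M^i(a)$, $M^1(a)=\mathbb{F}a$, and $M^0(a)M^i(a)\subset M^i(a)$ for all $i$, $M^2(a)M^2(a)\subset M^0(a)\oplus M^1(a)$, $M^2(a)M^3(a)\subset M^3(a)$, $M^3(a)M^3(a)\subset M^0(a)\oplus M^1(a)\oplus M^2(a)$. The Miyamoto involution $\tau(a)$ is the automorphism acting as $1$ on $M^0(a)\oplus M^1(a)\oplus M^2(a)$ and $-1$ on $M^3(a)$. $M$ is dihedral with axes $(a_i)_{i\in\mathbb{Z}}$ if: $M$ is generated by the $a_i$; $a_i\mapsto a_{i+1}$ extends to an automorphism of $M$; and $\tau(a_j)(a_i)=a_{2j-i}$ for all $i,j$. For $i,j\in\mathbb{Z}$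 put $p_{i,j}=a_ja_{i+j}-\eta(a_j+a_{i+j})$. It is known that $a_0p_{i,0}\in\mathbb{F}a_0$; the scalar $\lambda_i\in\mathbb{F}$ is defined by $a_0p_{i,0}=((1-\eta)\lambda_i-\eta)a_0$. (Such a $\mu$ exists by a proposition of the paper.) *)

theory Defs
  imports Complex_Main
begin

definition comm_algebra :: "('f::field \<Rightarrow> 'm::ab_group_add \<Rightarrow> 'm) \<Rightarrow> ('m \<Rightarrow> 'm \<Rightarrow> 'm) \<Rightarrow> bool" where
  "comm_algebra sc mul \<longleftrightarrow> Vector_Spaces.vector_space sc
     \<and> (\<forall>x y. mul x y = mul y x)
     \<and> (\<forall>x y z. mul (x + y) z = mul x z + mul y z)
     \<and> (\<forall>c x y. mul (sc c x) y = sc c (mul x y))"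

definition setsum :: "'m::ab_group_add set \<Rightarrow> 'm set \<Rightarrow> 'm set" where
  "setsum A B = {x + y |x y. x \<in> A \<and> y \<in> B}"

definition Phi :: "'f::field \<Rightarrow> nat \<Rightarrow> 'f" where
  "Phi eta i = (if i = 0 then 0 else if i = 1 then 1 else eta)"

text \<open>a is an axis with decomposition M = V 0 + V 1 + V 2 + V 3 (direct sum),
  for the fusion law of Majorana type (eta, eta).\<close>
definition is_axis :: "('f::field \<Rightarrow> 'm::ab_group_add \<Rightarrow> 'm) \<Rightarrow> ('m \<Rightarrow> 'm \<Rightarrow> 'm) \<Rightarrow> 'f
    \<Rightarrow> 'm \<Rightarrow> (nat \<Rightarrow> 'm set) \<Rightarrow> bool" where
  "is_axis sc mul eta a V \<longleftrightarrow>
     (\<forall>i<4. module.subspace sc (V i))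
     \<and> (\<forall>x. \<exists>!(x0, x1, x2, x3). x0 \<in> V 0 \<and> x1 \<in> V 1 \<and> x2 \<in> V 2 \<and> x3 \<in> V 3
              \<and> x = x0 + x1 + x2 + x3)
     \<and> (\<forall>i<4. \<forall>x\<in>V i. mul x a = sc (Phi eta i) x)
     \<and> V 1 = range (\<lambda>c. sc c a)
     \<and> (\<forall>i<4. \<forall>x\<in>V 0. \<forall>y\<in>V i. mul x y \<in> V i)
     \<and> (\<forall>x\<in>V 2. \<forall>y\<in>V 2. mul x y \<in> setsum (V 0) (V 1))
     \<and> (\<forall>x\<in>V 2. \<forall>y\<in>V 3. mul x y \<in> V 3)
     \<and> (\<forall>x\<in>V 3. \<forall>y\<in>V 3. mul x y \<in> setsum (setsum (V 0) (V 1)) (V 2))"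

definition miyamoto :: "(nat \<Rightarrow> 'm::ab_group_add set) \<Rightarrow> 'm \<Rightarrow> 'm" where
  "miyamoto V x = (THE y. \<exists>x0 x1 x2 x3. x0 \<in> V 0 \<and> x1 \<in> V 1 \<and> x2 \<in> V 2 \<and> x3 \<in> V 3
      \<and> x = x0 + x1 + x2 + x3 \<and> y = x0 + x1 + x2 - x3)"

inductive_set gen_subalg :: "('f::field \<Rightarrow> 'm::ab_group_add \<Rightarrow> 'm) \<Rightarrow> ('m \<Rightarrow> 'm \<Rightarrow> 'm) \<Rightarrow> 'm set \<Rightarrow> 'm set"
  for sc mul S where
  base: "x \<in> S \<Longrightarrow> x \<in> gen_subalg sc mul S"
| zero: "0 \<in> gen_subalg sc mul S"
| add: "x \<in> gen_subalg sc mul S \<Longrightarrow> y \<in> gen_subalg sc mul S \<Longrightarrow> x + y \<in> gen_subalg sc mul S"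
| smult: "x \<in> gen_subalg sc mul S \<Longrightarrow> sc c x \<in> gen_subalg sc mul S"
| mult: "x \<in> gen_subalg sc mul S \<Longrightarrow> y \<in> gen_subalg sc mul S \<Longrightarrow> mul x y \<in> gen_subalg sc mul S"

definition is_automorphism :: "('f::field \<Rightarrow> 'm::ab_group_add \<Rightarrow> 'm) \<Rightarrow> ('m \<Rightarrow> 'm \<Rightarrow> 'm) \<Rightarrow> ('m \<Rightarrow> 'm) \<Rightarrow> bool" where
  "is_automorphism sc mul f \<longleftrightarrow> bij f \<and> Vector_Spaces.linear sc sc f
      \<and> (\<forall>x y. f (mul x y) = mul (f x) (f y))"

definition dihedral_algebra :: "('f::field \<Rightarrow> 'm::ab_group_add \<Rightarrow> 'm) \<Rightarrow> ('m \<Rightarrow> 'm \<Rightarrow> 'm) \<Rightarrow> 'f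
    \<Rightarrow> (int \<Rightarrow> 'm) \<Rightarrow> (int \<Rightarrow> nat \<Rightarrow> 'm set) \<Rightarrow> bool" where
  "dihedral_algebra sc mul eta a D \<longleftrightarrow>
     comm_algebra sc mul
     \<and> (\<forall>i. is_axis sc mul eta (a i) (D i))
     \<and> gen_subalg sc mul (range a) = UNIV
     \<and> (\<exists>f. is_automorphism sc mul f \<and> (\<forall>i. f (a i) = a (i + 1)))
     \<and> (\<forall>i j. miyamoto (D j) (a i) = a (2 * j - i))"

definition pp :: "('f::field \<Rightarrow> 'm::ab_group_add \<Rightarrow> 'm) \<Rightarrow> ('m \<Rightarrow> 'm \<Rightarrow> 'm) \<Rightarrow> 'f
    \<Rightarrow> (int \<Rightarrow> 'm) \<Rightarrow> int \<Rightarrow> int \<Rightarrow> 'm" where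
  "pp sc mul eta a i j = mul (a j) (a (i + j)) - sc eta (a j + a (i + j))"

end

(*
  For lambda_1 = 3 eta / 4 the hypothesis on mu reads a_0 p_{2,1} = mu a_0.  The Miyamoto
  involution of a_0 swaps a_2 and a_{-2}, and a_0 x - eta x is invariant under it; hence
  p_{2,-2} = p_{2,0}.  Transporting along the shift automorphism a_i |-> a_{i+1}, p_{2,j}
  depends only on j mod 2 and a_j p_{2,j+1} = mu a_j for all j.  By Seress' lemma (M^0(a)
  associates with a), whenever a_j q = k a_j and a_{j+2} q = k a_{j+2} also q p_{2,j} = k p_{2,j}.
  For q = p_{2,1}, j = 0 and q = p_{2,0}, j = 1 this gives
  mu p_{2,0} = p_{2,1} p_{2,0} = p_{2,0} p_{2,1} = mu p_{2,1}.
*)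

theory Submission
  imports Defs
begin

lemma is_axisD:
  assumes "is_axis sc mul eta a V"
  shows is_axis_subspace: "i < 4 \<Longrightarrow> module.subspace sc (V i)"
    and is_axis_eigen: "i < 4 \<Longrightarrow> x \<in> V i \<Longrightarrow> mul x a = sc (Phi eta i) x"
    and is_axis_V1: "V 1 = range (\<lambda>c. sc c a)"
    and is_axis_fusion_V0: "i < 4 \<Longrightarrow> x \<in> V 0 \<Longrightarrow> y \<in> V i \<Longrightarrow> mul x y \<in> V i"
  using assms unfolding is_axis_def by simp_all

lemma is_axis_decomp:
  assumes "is_axis sc mul eta a V"
  shows "\<exists>!(x0, x1, x2, x3). x0 \<in> V 0 \<and> x1 \<in> V 1 \<and> x2 \<in> V 2 \<and> x3 \<in> V 3
           \<and> x = x0 + x1 + x2 + x3"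
  using assms unfolding is_axis_def by (elim conjE) (rule spec)

lemma is_axis_obtain_decomp:
  assumes "is_axis sc mul eta a V"
  obtains x0 x1 x2 x3
  where "x0 \<in> V 0" "x1 \<in> V 1" "x2 \<in> V 2" "x3 \<in> V 3" "x = x0 + x1 + x2 + x3"
  using is_axis_decomp[OF assms, of x] by auto

lemma is_axis_decomp_unique:
  assumes "is_axis sc mul eta a V"
    and "x0 \<in> V 0" "x1 \<in> V 1" "x2 \<in> V 2" "x3 \<in> V 3"
    and "y0 \<in> V 0" "y1 \<in> V 1" "y2 \<in> V 2" "y3 \<in> V 3"
    and "x0 + x1 + x2 + x3 = y0 + y1 + y2 + y3"
  shows "x0 = y0 \<and> x1 = y1 \<and> x2 = y2 \<and> x3 = y3"
proof -
  have "(x0, x1, x2, x3) = (y0, y1, y2, y3)"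
  proof (rule Uniq_D)
    show "\<exists>\<^sub>\<le>\<^sub>1(z0, z1, z2, z3). z0 \<in> V 0 \<and> z1 \<in> V 1 \<and> z2 \<in> V 2 \<and> z3 \<in> V 3
        \<and> x0 + x1 + x2 + x3 = z0 + z1 + z2 + z3"
      using is_axis_decomp[OF assms(1)] by (simp only: ex1_iff_ex_Uniq)
  qed (use assms(2-) in simp_all)
  then show ?thesis by simp
qed

lemma miyamoto_decomp:
  assumes "is_axis sc mul eta a V"
    and "x0 \<in> V 0" "x1 \<in> V 1" "x2 \<in> V 2" "x3 \<in> V 3"
  shows "miyamoto V (x0 + x1 + x2 + x3) = x0 + x1 + x2 - x3"
  unfolding miyamoto_def
proof (rule the_equality)
  fix y
  assume "\<exists>y0 y1 y2 y3. y0 \<in> V 0 \<and> y1 \<in> V 1 \<and> y2 \<in> V 2 \<and> y3 \<in> V 3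
      \<and> x0 + x1 + x2 + x3 = y0 + y1 + y2 + y3 \<and> y = y0 + y1 + y2 - y3"
  then obtain y0 y1 y2 y3 where "y0 \<in> V 0" "y1 \<in> V 1" "y2 \<in> V 2" "y3 \<in> V 3"
    and "x0 + x1 + x2 + x3 = y0 + y1 + y2 + y3" and "y = y0 + y1 + y2 - y3"
    by blast
  with is_axis_decomp_unique[OF assms, of y0 y1 y2 y3] show "y = x0 + x1 + x2 - x3"
    by simp
qed (use assms in blast)

lemma shift_invariant_eq:
  fixes u v :: "int \<Rightarrow> 'a"
  assumes "inj f" and "\<And>j. f (u j) = u (j + 1)" and "\<And>j. f (v j) = v (j + 1)"
    and "u j0 = v j0"
  shows "u j = v j"
proof (induction j rule: int_induct[where k = j0])
  case base
  show ?case by (fact assms(4))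
next
  case (step1 i)
  then show ?case by (metis assms(2,3))
next
  case (step2 i)
  then have "f (u (i - 1)) = f (v (i - 1))" using assms(2,3) by simp
  then show ?case using assms(1) by (simp add: inj_eq)
qed

locale commutative_algebra =
  fixes sc :: "'f::field \<Rightarrow> 'm::ab_group_add \<Rightarrow> 'm" and mul :: "'m \<Rightarrow> 'm \<Rightarrow> 'm"
  assumes comm_algebra: "comm_algebra sc mul"
begin

sublocale vector_space sc
  using comm_algebra by (simp add: comm_algebra_def)

lemma mul_commute: "mul x y = mul y x"
  using comm_algebra unfolding comm_algebra_def by blast

lemma mul_add_left: "mul (x + y) z = mul x z + mul y z"
  using comm_algebra unfolding comm_algebra_def by blast

lemma mul_scale_left: "mul (sc c x) y = sc c (mul x y)"
  using comm_algebra unfolding comm_algebra_def by blast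

lemma mul_add_right: "mul z (x + y) = mul z x + mul z y"
  by (simp only: mul_commute[of z] mul_add_left)

lemma mul_scale_right: "mul y (sc c x) = sc c (mul y x)"
  by (simp only: mul_commute[of y] mul_scale_left)

lemma mul_diff_left: "mul (x - y) z = mul x z - mul y z"
  by (metis mul_add_left add_diff_cancel diff_add_cancel)

lemma mul_diff_right: "mul z (x - y) = mul z x - mul z y"
  by (simp only: mul_commute[of z] mul_diff_left)

context
  fixes eta :: 'f and a :: 'm and V :: "nat \<Rightarrow> 'm set"
  assumes axis: "is_axis sc mul eta a V"
begin

lemma axis_mul_eigen: "i < 4 \<Longrightarrow> y \<in> V i \<Longrightarrow> mul a y = sc (Phi eta i) y"
  using is_axis_eigen[OF axis] mul_commute by metis

lemma axis_idempotent: "mul a a = a"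
proof -
  have "a \<in> V 1"
    using is_axis_V1[OF axis] by (metis rangeI scale_one)
  then show ?thesis
    using axis_mul_eigen[of 1] by (simp add: Phi_def)
qed

lemma axis_annihilator_subset_V0:
  assumes "eta \<noteq> 0" and "mul a x = 0"
  shows "x \<in> V 0"
proof -
  obtain x0 x1 x2 x3 where xs: "x0 \<in> V 0" "x1 \<in> V 1" "x2 \<in> V 2" "x3 \<in> V 3"
    and x: "x = x0 + x1 + x2 + x3"
    using is_axis_obtain_decomp[OF axis] .
  have zero: "0 \<in> V 0" "0 \<in> V 1" "0 \<in> V 2" "0 \<in> V 3"
    using is_axis_subspace[OF axis] subspace_0 by simp_all
  have "mul a x0 = 0" "mul a x1 = x1" "mul a x2 = sc eta x2" "mul a x3 = sc eta x3"
    using axis_mul_eigen[of 0 x0] axis_mul_eigen[of 1 x1] axis_mul_eigen[of 2 x2]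
      axis_mul_eigen[of 3 x3] xs
    by (simp_all add: Phi_def)
  then have "0 + x1 + sc eta x2 + sc eta x3 = 0 + 0 + 0 + 0"
    using assms(2) by (simp add: x mul_add_right)
  moreover have "sc eta x2 \<in> V 2" "sc eta x3 \<in> V 3"
    using xs(3,4) is_axis_subspace[OF axis] subspace_scale by simp_all
  ultimately have "0 = 0 \<and> x1 = 0 \<and> sc eta x2 = 0 \<and> sc eta x3 = 0"
    using is_axis_decomp_unique[OF axis zero(1) xs(2)] zero by blast
  then show ?thesis
    using assms(1) xs by (simp add: x)
qed

lemma axis_V0_mul_assoc:
  assumes "x \<in> V 0"
  shows "mul a (mul x b) = mul x (mul a b)"
proof -
  have component: "mul a (mul x y) = mul x (mul a y)" if "i < 4" "y \<in> V i" for i y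
  proof -
    have "mul x y \<in> V i"
      using is_axis_fusion_V0[OF axis that(1) assms that(2)] .
    then have "mul a (mul x y) = sc (Phi eta i) (mul x y)"
      using axis_mul_eigen[OF that(1)] by blast
    also have "\<dots> = mul x (mul a y)"
      using axis_mul_eigen[OF that] by (simp add: mul_scale_right)
    finally show ?thesis .
  qed
  obtain b0 b1 b2 b3 where bs: "b0 \<in> V 0" "b1 \<in> V 1" "b2 \<in> V 2" "b3 \<in> V 3"
    and "b = b0 + b1 + b2 + b3"
    using is_axis_obtain_decomp[OF axis] .
  then show ?thesis
    using component[OF _ bs(1)] component[OF _ bs(2)] component[OF _ bs(3)] component[OF _ bs(4)]
    by (simp add: mul_add_right)
qed

lemma axis_product_eigenvector:
  assumes "eta \<noteq> 0" and "mul a q = sc k a" and "mul b q = sc k b"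
  shows "mul q (mul a b) = sc k (mul a b)"
proof -
  define x where "x = q - sc k a"
  have "mul a x = 0"
    using assms(2) by (simp add: x_def mul_diff_right mul_scale_right axis_idempotent)
  then have "x \<in> V 0"
    by (rule axis_annihilator_subset_V0[OF assms(1)])
  then have "mul a (mul x b) = mul x (mul a b)"
    by (rule axis_V0_mul_assoc)
  moreover have "mul x b = sc k b - sc k (mul a b)"
    using assms(3) by (simp add: x_def mul_diff_left mul_scale_left mul_commute[of q b])
  ultimately show ?thesis
    by (simp add: x_def mul_diff_left mul_diff_right mul_scale_left mul_scale_right)
qed

lemma axis_miyamoto_mul:
  "mul a (miyamoto V x) - sc eta (miyamoto V x) = mul a x - sc eta x"
proof -
  obtain x0 x1 x2 x3 where xs: "x0 \<in> V 0" "x1 \<in> V 1" "x2 \<in> V 2" "x3 \<in> V 3"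
    and x: "x = x0 + x1 + x2 + x3"
    using is_axis_obtain_decomp[OF axis] .
  have "miyamoto V x = x - (x3 + x3)"
    using miyamoto_decomp[OF axis xs] by (simp add: x algebra_simps)
  moreover have "x3 + x3 \<in> V 3"
    using xs(4) is_axis_subspace[OF axis, of 3] subspace_add by simp
  then have "mul a (x3 + x3) = sc eta (x3 + x3)"
    using axis_mul_eigen[of 3] by (simp add: Phi_def)
  ultimately show ?thesis
    by (simp add: mul_diff_right scale_right_diff_distrib)
qed

end

end

locale dihedral_axial_algebra =
  fixes sc :: "'f::field \<Rightarrow> 'm::ab_group_add \<Rightarrow> 'm" and mul :: "'m \<Rightarrow> 'm \<Rightarrow> 'm"
    and eta :: 'f and a :: "int \<Rightarrow> 'm" and D :: "int \<Rightarrow> nat \<Rightarrow> 'm set"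
  assumes dihedral_algebra: "dihedral_algebra sc mul eta a D"
begin

sublocale commutative_algebra sc mul
  using dihedral_algebra by unfold_locales (simp add: dihedral_algebra_def)

abbreviation p :: "int \<Rightarrow> int \<Rightarrow> 'm" where
  "p \<equiv> pp sc mul eta a"

lemma axis: "is_axis sc mul eta (a i) (D i)"
  using dihedral_algebra by (simp add: dihedral_algebra_def)

lemma miyamoto_axis: "miyamoto (D j) (a i) = a (2 * j - i)"
  using dihedral_algebra by (simp add: dihedral_algebra_def)

definition shift :: "'m \<Rightarrow> 'm" where
  "shift = (SOME f. is_automorphism sc mul f \<and> (\<forall>i. f (a i) = a (i + 1)))"

lemma shift_automorphism: "is_automorphism sc mul shift"
  and shift_axis: "shift (a i) = a (i + 1)"
proof -
  have "\<exists>f. is_automorphism sc mul f \<and> (\<forall>i. f (a i) = a (i + 1))"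
    using dihedral_algebra by (simp add: dihedral_algebra_def)
  then have "is_automorphism sc mul shift \<and> (\<forall>i. shift (a i) = a (i + 1))"
    unfolding shift_def by (rule someI_ex)
  then show "is_automorphism sc mul shift" "shift (a i) = a (i + 1)"
    by simp_all
qed

sublocale shift: Vector_Spaces.linear sc sc shift
  using shift_automorphism by (simp add: is_automorphism_def)

lemma inj_shift: "inj shift"
  using shift_automorphism by (simp add: is_automorphism_def bij_is_inj)

lemma shift_mul: "shift (mul x y) = mul (shift x) (shift y)"
  using shift_automorphism by (simp add: is_automorphism_def)

lemma shift_pp: "shift (p i j) = p i (j + 1)"
  by (simp add: pp_def shift.diff shift.scale shift.add shift_mul shift_axis algebra_simps)

lemma pp_reflect: "p i (- i) = p i 0"
proof -
  have "mul (a 0) (a (- i)) - sc eta (a (- i)) = mul (a 0) (a i) - sc eta (a i)"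
    using axis_miyamoto_mul[OF axis, of 0 "a i"] by (simp add: miyamoto_axis)
  then show ?thesis
    by (simp add: pp_def mul_commute[of "a (- i)"] scale_right_distrib algebra_simps)
qed

lemma pp_periodic: "p i (j + i) = p i j"
proof -
  have "shift (p i (j + i)) = p i (j + 1 + i)" for j
    by (simp add: shift_pp algebra_simps)
  then show ?thesis
    by (rule shift_invariant_eq[OF inj_shift, of "\<lambda>j. p i (j + i)" "p i" "- i"])
      (simp_all add: shift_pp pp_reflect)
qed

lemma axis_pp_shift:
  assumes "mul (a 0) (p i j) = sc c (a 0)"
  shows "mul (a k) (p i (j + k)) = sc c (a k)"
  using shift_invariant_eq[OF inj_shift,
      of "\<lambda>k. mul (a k) (p i (j + k))" "\<lambda>k. sc c (a k)" 0]
  by (simp add: shift_mul shift_axis shift_pp shift.scale add.assoc assms)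

lemma pp_eigenvector:
  assumes "eta \<noteq> 0" and "mul (a j) q = sc k (a j)" and "mul (a (i + j)) q = sc k (a (i + j))"
  shows "mul q (p i j) = sc k (p i j)"
proof -
  have "mul q (p i j) = mul q (mul (a j) (a (i + j))) - sc eta (mul q (a j) + mul q (a (i + j)))"
    by (simp add: pp_def mul_diff_right mul_scale_right mul_add_right)
  also have "\<dots> = sc k (mul (a j) (a (i + j))) - sc eta (sc k (a j) + sc k (a (i + j)))"
    using axis_product_eigenvector[OF axis assms] assms(2,3) by (simp add: mul_commute[of q])
  also have "\<dots> = sc k (p i j)"
    by (simp add: pp_def scale_right_diff_distrib scale_right_distrib mult.commute[of eta k])
  finally show ?thesis .
qed

lemma pp_2_1_eq_pp_2_0_or_eigenvalue_zero:
  assumes "eta \<noteq> 0" and "mul (a 0) (p 2 1) = sc mu (a 0)"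
  shows "p 2 1 = p 2 0 \<or> mu = 0"
proof -
  have shifted: "mul (a k) (p 2 (k + 1)) = sc mu (a k)" for k
    by (metis axis_pp_shift[OF assms(2)] add.commute)
  have eigen: "mul (p 2 (j + 1)) (p 2 j) = sc mu (p 2 j)" for j
  proof (rule pp_eigenvector[OF assms(1)])
    show "mul (a j) (p 2 (j + 1)) = sc mu (a j)"
      by (rule shifted)
    show "mul (a (2 + j)) (p 2 (j + 1)) = sc mu (a (2 + j))"
      using shifted[of "2 + j"] pp_periodic[of 2 "j + 1"] by (simp add: algebra_simps)
  qed
  have "sc mu (p 2 0) = mul (p 2 1) (p 2 0)"
    using eigen[of 0] by simp
  also have "\<dots> = mul (p 2 0) (p 2 1)"
    by (rule mul_commute)
  also have "\<dots> = sc mu (p 2 1)"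
    using eigen[of 1] pp_periodic[of 2 0] by simp
  finally show ?thesis
    by auto
qed

end

theorem corollary1:
  fixes sc :: "'f::field \<Rightarrow> 'm::ab_group_add \<Rightarrow> 'm"
    and mul :: "'m \<Rightarrow> 'm \<Rightarrow> 'm"
    and eta lam1 mu :: 'f
    and a :: "int \<Rightarrow> 'm"
    and D :: "int \<Rightarrow> nat \<Rightarrow> 'm set"
  assumes char: "(2::'f) \<noteq> 0"
    and eta: "eta \<noteq> 0" "eta \<noteq> 1" "eta \<noteq> 1 / 2"
    and dih: "dihedral_algebra sc mul eta a D"
    and lam1_def: "mul (a 0) (pp sc mul eta a 1 0) = sc ((1 - eta) * lam1 - eta) (a 0)"
    and mu: "mul (a 0) (pp sc mul eta a 2 1)
       = sc ((2 * eta - 1) * (4 * lam1 - 3 * eta) / (2 * eta))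
            (sc 2 (pp sc mul eta a 1 0) + sc eta (a 1 + a (-1))) + sc mu (a 0)"
    and lam1: "lam1 = 3 * eta / 4"
  shows "pp sc mul eta a 2 1 = pp sc mul eta a 2 0 \<or> mu = 0"
proof -
  interpret dihedral_axial_algebra sc mul eta a D
    by unfold_locales (fact dih)
  have "(4::'f) = 2 * 2"
    by simp
  then have "(4::'f) \<noteq> 0"
    using char by (metis mult_eq_0_iff)
  then have "mul (a 0) (p 2 1) = sc mu (a 0)"
    using mu by (simp add: lam1)
  then show ?thesis
    by (rule pp_2_1_eq_pp_2_0_or_eigenvalue_zero[OF eta(1)])
qed

end
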